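(* Let $t,R,\ell$ be positive integers and $k=2^t$. Let $f$ be given by a level-4 pseudo-expectation functional $\tilde{\mathbb E}_f$ on polynomials in the variables $\{\hat f_\alpha\}$, $\alpha\in\{0,\dots,k-1\}^R$ with $|\alpha|\le\ell$, satisfying $\tilde{\mathbb E}_f\|f\|^4\le1$. Let $\tau=\tilde{\mathbb E}_f\sum_{r=1}^R(\mathrm{Inf}_rf)^2$. Then \[\tilde{\mathbb E}_f\,\mathbb E_{\mathcal X}f^4=\tilde{\mathbb E}_f\,\mathbb E_{\mathcal Y}f^4\pm k^{O(\ell)}\sqrt\tau,\] i.e. there is an absolute constant $C_0$ such that $|\tilde{\mathbb E}_f\mathbb E_{\mathcal X}f^4-\tilde{\mathbb E}_f\mathbb E_{\mathcal Y}f^4|\le k^{C_0\ell}\sqrt\tau$.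
   Context: For $\alpha\in\{0,\dots,k-1\}^R$, $|\alpha|$ is the number of nonzero entries. $f$ denotes the formal multilinear polynomial $f=\sum_{|\alpha|\le\ell}\hat f_\alpha\prod_{r=1}^R Z_{r,\alpha_r}$ evaluated on a sequence of ensembles $Z=(Z_{r,i})_{r\in[R],\,0\le i<k}$. Ensemble $\mathcal X$: identify $\{0,\dots,k-1\}$ with the characters $\chi_0,\dots,\chi_{k-1}$ of $\mathrm{GF}(2)^t$ ($\chi_0\equiv1$), sample $x$ uniformly from $(\mathrm{GF}(2)^t)^R$ and set $X_{r,i}=\chi_i(x_r)$. Ensemble $\mathcal Y$: $Y_{r,0}\equiv1$ and $Y_{r,j}$ ($j\ge1$) are independent unbiased $\{\pm1\}$ variables. Then $\mathbb E_{\mathcal X}f^4$ and $\mathbb E_{\mathcal Y}f^4$ are degree-4 polynomials in the coefficients $\hat f_\alpha$. Also $\|f\|^2=\sum_\alpha\hat f_\alpha^2$ and $\mathrm{Inf}_rf=\sum_{\alpha:\alpha_r\ne0}\hat f_\alpha^2$. A level-4 pseudo-expectation functional is a linear map from polynomials of degree at most 4 in the variables to $\mathbb R$ with $\tilde{\mathbb E}[1]=1$ and $\tilde{\mathbb E}[P^2]\ge0$ for all $P$ of degree at most 2. *)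

theory Defs
  imports Complex_Main "HOL-Library.Multiset" "HOL-Library.FuncSet" "HOL-Combinatorics.Permutations"
begin

definition multi_indices :: "nat \<Rightarrow> nat \<Rightarrow> nat \<Rightarrow> (nat \<Rightarrow> nat) set" where
  "multi_indices k R l = {\<alpha>. (\<forall>r\<ge>R. \<alpha> r = 0) \<and> (\<forall>r<R. \<alpha> r < k)
      \<and> card {r. r < R \<and> \<alpha> r \<noteq> 0} \<le> l}"

definition monomials_upto :: "'v set \<Rightarrow> nat \<Rightarrow> 'v multiset set" where
  "monomials_upto I d = {m. set_mset m \<subseteq> I \<and> size m \<le> d}"

text \<open>A linear functional on polynomials of degree <= 4 in the variables I is determined
  by its values L m on monomials m (with size m <= 4): Ee[sum_m c_m m] = sum_m c_m L m.
  Level-4 pseudo-expectation: Ee[1] = 1 and Ee[P^2] >= 0 for every P of degree <= 2.\<close>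
definition pseudo_exp4 :: "'v set \<Rightarrow> ('v multiset \<Rightarrow> real) \<Rightarrow> bool" where
  "pseudo_exp4 I L \<longleftrightarrow> L {#} = 1 \<and>
     (\<forall>c :: 'v multiset \<Rightarrow> real.
        (\<Sum>m1\<in>monomials_upto I 2. \<Sum>m2\<in>monomials_upto I 2. c m1 * c m2 * L (m1 + m2)) \<ge> 0)"

text \<open>Ee applied to ||f||^4 = (sum_alpha f_alpha^2)^2.\<close>
definition pE_norm4 :: "'v set \<Rightarrow> ('v multiset \<Rightarrow> real) \<Rightarrow> real" where
  "pE_norm4 I L = (\<Sum>\<alpha>\<in>I. \<Sum>\<beta>\<in>I. L {#\<alpha>, \<alpha>, \<beta>, \<beta>#})"

text \<open>tau = Ee sum_{r} (Inf_r f)^2, Inf_r f = sum_{alpha_r /= 0} f_alpha^2.\<close>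
definition pE_tau :: "nat \<Rightarrow> (nat \<Rightarrow> nat) set \<Rightarrow> ((nat \<Rightarrow> nat) multiset \<Rightarrow> real) \<Rightarrow> real" where
  "pE_tau R I L = (\<Sum>r<R. \<Sum>\<alpha>\<in>{\<alpha>\<in>I. \<alpha> r \<noteq> 0}. \<Sum>\<beta>\<in>{\<beta>\<in>I. \<beta> r \<noteq> 0}.
                     L {#\<alpha>, \<alpha>, \<beta>, \<beta>#})"

text \<open>Ee applied to E_Z f^4 for an ensemble Z given by a finite uniform sample space S,
  with Z_{r,i} = val s r i at sample point s. By linearity,
  Ee E_Z f^4 = sum over alpha,beta,gamma,delta of Ee[f_a f_b f_c f_d] E_Z[prod ...].\<close>
definition mono_val :: "nat \<Rightarrow> (nat \<Rightarrow> nat \<Rightarrow> real) \<Rightarrow> (nat \<Rightarrow> nat) \<Rightarrow> real" where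
  "mono_val R v \<alpha> = (\<Prod>r<R. v r (\<alpha> r))"

definition pE_moment4 :: "nat \<Rightarrow> (nat \<Rightarrow> nat) set \<Rightarrow> ((nat \<Rightarrow> nat) multiset \<Rightarrow> real)
    \<Rightarrow> 's set \<Rightarrow> ('s \<Rightarrow> nat \<Rightarrow> nat \<Rightarrow> real) \<Rightarrow> real" where
  "pE_moment4 R I L S val =
     (\<Sum>\<alpha>\<in>I. \<Sum>\<beta>\<in>I. \<Sum>\<gamma>\<in>I. \<Sum>\<delta>\<in>I. L {#\<alpha>, \<beta>, \<gamma>, \<delta>#} *
        ((\<Sum>s\<in>S. mono_val R (val s) \<alpha> * mono_val R (val s) \<beta> * mono_val R (val s) \<gamma>
                   * mono_val R (val s) \<delta>) / real (card S)))"

text \<open>Characters of GF(2)^t: elements of GF(2)^t are encoded as numbers < 2^t (bit vectors);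
  chi_i(x) = (-1)^(<i,x>) for i < 2^t. The set of characters {chi_0,...,chi_{k-1}} is
  identified with {0..k-1} via an arbitrary bijection sigma fixing 0 (so chi_0 = 1).\<close>
definition gf2_char :: "nat \<Rightarrow> nat \<Rightarrow> nat \<Rightarrow> real" where
  "gf2_char t i x = (-1) ^ card {j. j < t \<and> bit i j \<and> bit x j}"

text \<open>Ensemble X: x uniform in (GF(2)^t)^R, X_{r,i} = chi_{sigma i}(x_r).\<close>
definition X_space :: "nat \<Rightarrow> nat \<Rightarrow> (nat \<Rightarrow> nat) set" where
  "X_space t R = {0..<R} \<rightarrow>\<^sub>E {0..<2^t}"

definition X_val :: "nat \<Rightarrow> (nat \<Rightarrow> nat) \<Rightarrow> (nat \<Rightarrow> nat) \<Rightarrow> nat \<Rightarrow> nat \<Rightarrow> real" where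
  "X_val t \<sigma> x r i = gf2_char t (\<sigma> i) (x r)"

text \<open>Ensemble Y: Y_{r,0} = 1, Y_{r,j} (1 <= j < k) independent uniform +-1.\<close>
definition Y_space :: "nat \<Rightarrow> nat \<Rightarrow> (nat \<Rightarrow> nat \<Rightarrow> real) set" where
  "Y_space k R = {0..<R} \<rightarrow>\<^sub>E ({1..<k} \<rightarrow>\<^sub>E {-1, 1})"

definition Y_val :: "(nat \<Rightarrow> nat \<Rightarrow> real) \<Rightarrow> nat \<Rightarrow> nat \<Rightarrow> real" where
  "Y_val y r i = (if i = 0 then 1 else y r i)"

end

theory Submission
  imports Defs
begin

text \<open>
  By linearity both sides are sums of pseudo-moments of \<open>f\<^sub>\<alpha> f\<^sub>\<beta> f\<^sub>\<gamma> f\<^sub>\<delta>\<close> weighted by the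
  ensemble moments of products of four monomials. These factorise over the coordinates: under X a
  coordinate contributes the indicator of \<open>\<sigma> \<alpha>\<^sub>r \<oplus> \<sigma> \<beta>\<^sub>r = \<sigma> \<gamma>\<^sub>r \<oplus> \<sigma> \<delta>\<^sub>r\<close>, under Y the
  indicator that every nonzero index occurs an even number of times. Since \<open>Z\<^sub>r\<^sub>,\<^sub>i\<^sup>2 = 1\<close>,
  coordinates where \<open>\<alpha>\<close> and \<open>\<beta>\<close> agree cancel; grouping the pairs \<open>(\<alpha>, \<beta>)\<close> by what remains
  writes the difference as \<open>\<Sum> C(u,v) Q(u,v)\<close>, where \<open>Q\<close> is a block matrix of pseudo-moments
  that is positive semidefinite by the level-4 condition.

  The ensembles disagree on \<open>(u, v)\<close> only if \<open>u\<close> or \<open>v\<close> is heavy, i.e. has a coordinate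
  carrying two distinct nonzero indices, and each \<open>u\<close> has at most \<open>k\<^sup>2\<^sup>l\<close> partners \<open>v\<close>.
  Weighted AM-GM bounds the difference by \<open>k\<^sup>2\<^sup>l (\<eta> \<Sum>\<^sub>h\<^sub>e\<^sub>a\<^sub>v\<^sub>y Q(u,u) + \<Sum> Q(u,u) / \<eta>)\<close>;
  a pseudo Cauchy-Schwarz step and a count of the members of each class bound the two diagonal
  sums by \<open>4\<^sup>l \<tau>\<close> and \<open>4\<^sup>l \<parallel>f\<parallel>\<^sup>4 \<le> 4\<^sup>l\<close>, and optimising \<open>\<eta>\<close> gives the bound
  \<open>2 \<cdot> 4\<^sup>l k\<^sup>2\<^sup>l \<surd>\<tau> \<le> k\<^sup>5\<^sup>l \<surd>\<tau>\<close>.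
\<close>

unbundle bit_operations_syntax

section \<open>Sums and products over finite sets\<close>

lemma mean_PiE_prod:
  fixes F :: "'a \<Rightarrow> 'b \<Rightarrow> real"
  assumes "finite A" "finite B"
  shows "(\<Sum>x\<in>A \<rightarrow>\<^sub>E B. \<Prod>r\<in>A. F r (x r)) / card (A \<rightarrow>\<^sub>E B) = (\<Prod>r\<in>A. (\<Sum>v\<in>B. F r v) / card B)"
  using assms by (simp add: prod_sum_PiE[symmetric] card_PiE prod_dividef)

lemma prod_indicator_eq: "finite A \<Longrightarrow> (\<Prod>r\<in>A. if P r then 1 else (0::real)) = (if \<forall>r\<in>A. P r then 1 else 0)"
  by (auto intro: prod.neutral)

lemma sum4_eq_sum_pairs:
  "(\<Sum>\<alpha>\<in>I. \<Sum>\<beta>\<in>I. \<Sum>\<gamma>\<in>I. \<Sum>\<delta>\<in>I. h \<alpha> \<beta> \<gamma> \<delta>)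
     = (\<Sum>p\<in>I\<times>I. \<Sum>q\<in>I\<times>I. h (fst p) (snd p) (fst q) (snd q))"
proof -
  have pairs: "(\<Sum>x\<in>A. \<Sum>y\<in>B. g x y) = (\<Sum>p\<in>A \<times> B. g (fst p) (snd p))" for A B and g :: "_ \<Rightarrow> _ \<Rightarrow> 'c::comm_monoid_add"
    by (simp add: sum.cartesian_product split_def)
  have "(\<Sum>p\<in>I\<times>I. \<Sum>q\<in>I\<times>I. h (fst p) (snd p) (fst q) (snd q))
      = (\<Sum>\<alpha>\<in>I. \<Sum>\<beta>\<in>I. \<Sum>q\<in>I\<times>I. h \<alpha> \<beta> (fst q) (snd q))"
    by (rule pairs[symmetric])
  also have "\<dots> = (\<Sum>\<alpha>\<in>I. \<Sum>\<beta>\<in>I. \<Sum>\<gamma>\<in>I. \<Sum>\<delta>\<in>I. h \<alpha> \<beta> \<gamma> \<delta>)"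
    by (intro sum.cong refl) (rule pairs[symmetric])
  finally show ?thesis by simp
qed

lemma sum_fibres_mult:
  fixes \<phi> :: "'a \<Rightarrow> real"
  assumes "finite S" "finite T" "g ` S \<subseteq> T"
  shows "(\<Sum>m\<in>T. (\<Sum>p\<in>{p\<in>S. g p = m}. \<phi> p) * H m) = (\<Sum>p\<in>S. \<phi> p * H (g p))"
proof -
  have "(\<Sum>m\<in>T. (\<Sum>p\<in>{p\<in>S. g p = m}. \<phi> p) * H m) = (\<Sum>m\<in>T. \<Sum>p\<in>{p\<in>S. g p = m}. \<phi> p * H (g p))"
    by (auto simp: sum_distrib_right intro!: sum.cong)
  also have "\<dots> = (\<Sum>p\<in>S. \<phi> p * H (g p))"
    using sum.group[OF assms, of "\<lambda>p. \<phi> p * H (g p)"] by simp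
  finally show ?thesis .
qed

lemma sum_sum_group_by_image:
  fixes F :: "'a \<Rightarrow> 'a \<Rightarrow> real"
  assumes "finite Z"
  shows "(\<Sum>p\<in>Z. \<Sum>q\<in>Z. C (s p) (s q) * F p q)
       = (\<Sum>u\<in>s`Z. \<Sum>v\<in>s`Z. C u v * (\<Sum>p\<in>{p\<in>Z. s p = u}. \<Sum>q\<in>{q\<in>Z. s q = v}. F p q))"
proof -
  have "(\<Sum>u\<in>s`Z. \<Sum>v\<in>s`Z. C u v * (\<Sum>p\<in>{p\<in>Z. s p = u}. \<Sum>q\<in>{q\<in>Z. s q = v}. F p q))
      = (\<Sum>u\<in>s`Z. \<Sum>v\<in>s`Z. \<Sum>p\<in>{p\<in>Z. s p = u}. \<Sum>q\<in>{q\<in>Z. s q = v}. C (s p) (s q) * F p q)"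
    by (intro sum.cong refl) (auto simp: sum_distrib_left)
  also have "\<dots> = (\<Sum>u\<in>s`Z. \<Sum>p\<in>{p\<in>Z. s p = u}. \<Sum>v\<in>s`Z. \<Sum>q\<in>{q\<in>Z. s q = v}. C (s p) (s q) * F p q)"
    by (intro sum.cong refl) (rule sum.swap)
  also have "\<dots> = (\<Sum>u\<in>s`Z. \<Sum>p\<in>{p\<in>Z. s p = u}. \<Sum>q\<in>Z. C (s p) (s q) * F p q)"
    using assms by (intro sum.cong refl sum.group) auto
  also have "\<dots> = (\<Sum>p\<in>Z. \<Sum>q\<in>Z. C (s p) (s q) * F p q)"
    using assms by (intro sum.group) auto
  finally show ?thesis by simp
qed

lemma sum_adjacent_le:
  fixes W :: "'u \<Rightarrow> real" and N :: real
  assumes "finite S" "\<And>u. u \<in> S \<Longrightarrow> 0 \<le> W u" "\<And>u. u \<in> S \<Longrightarrow> card {v\<in>S. adj u v} \<le> N"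
  shows "(\<Sum>u\<in>S. \<Sum>v\<in>S. of_bool (adj u v) * W u) \<le> N * (\<Sum>u\<in>S. W u)"
proof -
  have "(\<Sum>v\<in>S. of_bool (adj u v)) = real (card {v\<in>S. adj u v})" for u
  proof -
    have "S \<inter> {v. adj u v} = {v\<in>S. adj u v}" by auto
    then show ?thesis using \<open>finite S\<close> by simp
  qed
  then have "(\<Sum>u\<in>S. \<Sum>v\<in>S. of_bool (adj u v) * W u) = (\<Sum>u\<in>S. card {v\<in>S. adj u v} * W u)"
    by (simp add: sum_distrib_right[symmetric])
  also have "\<dots> \<le> (\<Sum>u\<in>S. N * W u)"
    using assms(2,3) by (intro sum_mono mult_right_mono)
  finally show ?thesis by (simp add: sum_distrib_left)
qed

lemma abs_le_heavy_weights:
  fixes q qu qv :: real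
  assumes "\<eta> > 0" "0 \<le> qu" "0 \<le> qv" "hu \<or> hv"
    and "2 * \<bar>q\<bar> \<le> \<eta> * qu + qv / \<eta>" "2 * \<bar>q\<bar> \<le> \<eta> * qv + qu / \<eta>"
  shows "2 * \<bar>q\<bar> \<le> (\<eta> * of_bool hu * qu + qu / \<eta>) + (\<eta> * of_bool hv * qv + qv / \<eta>)"
proof -
  have "0 \<le> qu / \<eta>" "0 \<le> qv / \<eta>" "0 \<le> \<eta> * qu" "0 \<le> \<eta> * qv"
    using assms(1-3) by auto
  then show ?thesis using assms(4-6) by (cases hu; cases hv) auto
qed

text \<open>Each nonzero term \<open>C u v * Q u v\<close> is split between the diagonal terms of \<open>u\<close> and \<open>v\<close>;
  sparsity of the support of \<open>C\<close> bounds how often each diagonal term is charged.\<close>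
lemma abs_sum_sparse_form_le:
  fixes Q C :: "'u \<Rightarrow> 'u \<Rightarrow> real" and N :: real
  assumes "finite S" "\<eta> > 0"
    and Q_nonneg: "\<And>u. u \<in> S \<Longrightarrow> 0 \<le> Q u u"
    and Q_commute: "\<And>u v. u \<in> S \<Longrightarrow> v \<in> S \<Longrightarrow> Q u v = Q v u"
    and Q_amgm: "\<And>u v. u \<in> S \<Longrightarrow> v \<in> S \<Longrightarrow> 2 * \<bar>Q u v\<bar> \<le> \<eta> * Q u u + Q v v / \<eta>"
    and C_support: "\<And>u v. u \<in> S \<Longrightarrow> v \<in> S \<Longrightarrow> C u v \<noteq> 0 \<Longrightarrow> adj u v \<and> (heavy u \<or> heavy v)"
    and C_bounded: "\<And>u v. \<bar>C u v\<bar> \<le> 1"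
    and adj_commute: "\<And>u v. adj u v = adj v u"
    and degree: "\<And>u. u \<in> S \<Longrightarrow> card {v\<in>S. adj u v} \<le> N"
  shows "\<bar>\<Sum>u\<in>S. \<Sum>v\<in>S. C u v * Q u v\<bar>
    \<le> N * (\<eta> * (\<Sum>u\<in>S. of_bool (heavy u) * Q u u) + (\<Sum>u\<in>S. Q u u) / \<eta>)"
proof -
  define W where "W u = \<eta> * of_bool (heavy u) * Q u u + Q u u / \<eta>" for u
  have W_nonneg: "u \<in> S \<Longrightarrow> 0 \<le> W u" for u
    unfolding W_def using Q_nonneg[of u] \<open>\<eta> > 0\<close> by auto
  have term_le: "\<bar>C u v * Q u v\<bar> \<le> of_bool (adj u v) * W u / 2 + of_bool (adj u v) * W v / 2"
    if u: "u \<in> S" and v: "v \<in> S" for u v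
  proof (cases "C u v = 0")
    case True
    then show ?thesis using W_nonneg[OF u] W_nonneg[OF v] by auto
  next
    case False
    with C_support[OF u v] have "adj u v" "heavy u \<or> heavy v" by auto
    moreover have "\<bar>C u v * Q u v\<bar> \<le> \<bar>Q u v\<bar>"
      using C_bounded[of u v] by (simp add: abs_mult mult_left_le_one_le)
    moreover have "2 * \<bar>Q u v\<bar> \<le> W u + W v"
      unfolding W_def using Q_amgm[OF u v] Q_amgm[OF v u] Q_commute[OF u v] Q_nonneg[OF u] Q_nonneg[OF v]
      by (intro abs_le_heavy_weights \<open>\<eta> > 0\<close> \<open>heavy u \<or> heavy v\<close>) auto
    ultimately show ?thesis by simp
  qed
  have "\<bar>\<Sum>u\<in>S. \<Sum>v\<in>S. C u v * Q u v\<bar> \<le> (\<Sum>u\<in>S. \<Sum>v\<in>S. \<bar>C u v * Q u v\<bar>)"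
    by (rule order_trans[OF sum_abs]) (intro sum_mono sum_abs)
  also have "\<dots> \<le> (\<Sum>u\<in>S. \<Sum>v\<in>S. of_bool (adj u v) * W u / 2 + of_bool (adj u v) * W v / 2)"
    by (intro sum_mono term_le)
  also have "\<dots> = ((\<Sum>u\<in>S. \<Sum>v\<in>S. of_bool (adj u v) * W u)
      + (\<Sum>u\<in>S. \<Sum>v\<in>S. of_bool (adj u v) * W v)) / 2"
    by (simp add: sum.distrib sum_divide_distrib[symmetric])
  also have "(\<Sum>u\<in>S. \<Sum>v\<in>S. of_bool (adj u v) * W v) = (\<Sum>v\<in>S. \<Sum>u\<in>S. of_bool (adj u v) * W v)"
    by (rule sum.swap)
  also have "\<dots> = (\<Sum>v\<in>S. \<Sum>u\<in>S. of_bool (adj v u) * W v)"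
    by (intro sum.cong refl) (simp add: adj_commute)
  also have "((\<Sum>u\<in>S. \<Sum>v\<in>S. of_bool (adj u v) * W u) + \<dots>) / 2 \<le> N * (\<Sum>u\<in>S. W u)"
    using sum_adjacent_le[OF \<open>finite S\<close> W_nonneg degree] by simp
  also have "(\<Sum>u\<in>S. W u) = \<eta> * (\<Sum>u\<in>S. of_bool (heavy u) * Q u u) + (\<Sum>u\<in>S. Q u u) / \<eta>"
    unfolding W_def by (simp add: sum.distrib sum_distrib_left sum_divide_distrib mult.assoc)
  finally show ?thesis .
qed

lemma le_two_sqrt_mult_of_forall_pos:
  fixes D a b :: real
  assumes le: "\<And>\<eta>. \<eta> > 0 \<Longrightarrow> D \<le> \<eta> * a + b / \<eta>" and "0 \<le> a" "0 \<le> b"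
  shows "D \<le> 2 * sqrt (a * b)"
proof (cases "a = 0 \<or> b = 0")
  case True
  have "D \<le> 0"
  proof (rule ccontr)
    assume "\<not> D \<le> 0"
    then have "D > 0" by simp
    text \<open>Letting \<open>\<eta>\<close> tend to \<open>\<infinity>\<close> or to \<open>0\<close> kills the bound; one explicit value suffices.\<close>
    define \<eta> where "\<eta> = (if a = 0 then (b + 1) / D else D / (a + 1))"
    have "\<eta> > 0" using \<open>D > 0\<close> assms(2,3) by (simp add: \<eta>_def)
    then have "D \<le> \<eta> * a + b / \<eta>" by (rule le)
    also have "\<dots> < D"
    proof (cases "a = 0")
      case True
      then show ?thesis using \<open>D > 0\<close> assms(3) by (simp add: \<eta>_def field_simps)
    next
      case False
      then have "b = 0" using \<open>a = 0 \<or> b = 0\<close> by simp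
      then show ?thesis using False \<open>D > 0\<close> assms(2) by (simp add: \<eta>_def field_simps)
    qed
    finally show False by simp
  qed
  moreover have "0 \<le> sqrt (a * b)" using assms(2,3) by simp
  ultimately show ?thesis by linarith
next
  case False
  then have "a > 0" "b > 0" using assms(2,3) by auto
  define \<eta> where "\<eta> = sqrt b / sqrt a"
  have "\<eta> > 0" using \<open>a > 0\<close> \<open>b > 0\<close> by (simp add: \<eta>_def)
  then have "D \<le> \<eta> * a + b / \<eta>" by (rule le)
  also have "\<eta> * a = sqrt (a * b)"
    using \<open>a > 0\<close> by (simp add: \<eta>_def real_sqrt_mult field_simps real_sqrt_divide)
  also have "b / \<eta> = sqrt (a * b)"
    using \<open>a > 0\<close> \<open>b > 0\<close> by (simp add: \<eta>_def real_sqrt_mult field_simps)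
  finally show ?thesis by simp
qed

section \<open>Characters of \<open>GF(2)\<^sup>t\<close>\<close>

lemma neg_one_power_card_sym_diff:
  assumes "finite A" "finite B"
  shows "(-1::real) ^ card A * (-1) ^ card B = (-1) ^ card (sym_diff A B)"
proof -
  have "card (sym_diff A B) = card (A - B) + card (B - A)"
    using assms by (intro card_Un_disjoint) auto
  then have "card A + card B = card (sym_diff A B) + 2 * card (A \<inter> B)"
    using assms card_Int_Diff[of A B] card_Int_Diff[of B A] by (simp add: Int_commute)
  then have "(-1::real) ^ card A * (-1) ^ card B
      = (-1) ^ card (sym_diff A B) * ((-1) ^ 2) ^ card (A \<inter> B)"
    by (metis power_add power_mult)
  then show ?thesis by simp
qed

lemma gf2_char_xor_index: "gf2_char t i x * gf2_char t j x = gf2_char t (i XOR j) x"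
proof -
  have "{n. n < t \<and> bit (i XOR j) n \<and> bit x n} =
    ({n. n < t \<and> bit i n \<and> bit x n} - {n. n < t \<and> bit j n \<and> bit x n}) \<union>
    ({n. n < t \<and> bit j n \<and> bit x n} - {n. n < t \<and> bit i n \<and> bit x n})"
    by (auto simp: bit_xor_iff)
  then show ?thesis unfolding gf2_char_def by (simp add: neg_one_power_card_sym_diff)
qed

lemma gf2_char_xor_point: "gf2_char t i x * gf2_char t i y = gf2_char t i (x XOR y)"
proof -
  have "{n. n < t \<and> bit i n \<and> bit (x XOR y) n} =
    ({n. n < t \<and> bit i n \<and> bit x n} - {n. n < t \<and> bit i n \<and> bit y n}) \<union>
    ({n. n < t \<and> bit i n \<and> bit y n} - {n. n < t \<and> bit i n \<and> bit x n})"
    by (auto simp: bit_xor_iff)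
  then show ?thesis unfolding gf2_char_def by (simp add: neg_one_power_card_sym_diff)
qed

lemma gf2_char_0_index [simp]: "gf2_char t 0 x = 1"
  unfolding gf2_char_def by simp

lemma gf2_char_two_power:
  assumes "n < t" "bit i n"
  shows "gf2_char t i (2 ^ n) = -1"
proof -
  have "{m. m < t \<and> bit i m \<and> bit ((2::nat) ^ n) m} = {n}"
    using assms by (auto simp: bit_exp_iff)
  then show ?thesis unfolding gf2_char_def by simp
qed

lemma xor_less_two_power: "(x::nat) < 2 ^ n \<Longrightarrow> y < 2 ^ n \<Longrightarrow> x XOR y < 2 ^ n"
  by (metis take_bit_nat_eq_self_iff take_bit_xor)

lemma xor_eq_0_iff: "(x::nat) XOR y = 0 \<longleftrightarrow> x = y"
  by (metis xor.assoc xor.left_neutral xor_self_eq)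

lemma sum_gf2_char:
  assumes "i < 2 ^ t"
  shows "(\<Sum>x\<in>{0..<2^t}. gf2_char t i x) = (if i = 0 then 2 ^ t else 0)"
proof (cases "i = 0")
  case False
  then obtain n where n: "bit i n" using bit_eq_iff[of i 0] by auto
  then have "n < t" using assms by (metis bit_take_bit_iff take_bit_nat_eq_self_iff)
  text \<open>Translation by the basis vector \<open>2 ^ n\<close> permutes the group and negates the character.\<close>
  let ?g = "\<lambda>x::nat. x XOR 2 ^ n"
  have "(\<Sum>x\<in>{0..<2^t}. gf2_char t i x) = (\<Sum>x\<in>{0..<2^t}. gf2_char t i (?g x))"
    by (rule sum.reindex_bij_witness[of _ ?g ?g]) (use \<open>n < t\<close> in \<open>auto simp: xor_less_two_power xor.assoc\<close>)
  also have "\<dots> = - (\<Sum>x\<in>{0..<2^t}. gf2_char t i x)"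
    by (simp add: gf2_char_xor_point[symmetric] gf2_char_two_power[OF \<open>n < t\<close> n] sum_negf)
  finally show ?thesis using False by simp
qed simp

section \<open>Level-4 pseudo-expectations\<close>

definition pair_moment :: "('v multiset \<Rightarrow> real) \<Rightarrow> 'v \<times> 'v \<Rightarrow> 'v \<times> 'v \<Rightarrow> real" where
  "pair_moment L p q = L {#fst p, snd p, fst q, snd q#}"

definition block_moment :: "('v multiset \<Rightarrow> real) \<Rightarrow> ('v \<times> 'v) set \<Rightarrow> ('v \<times> 'v) set \<Rightarrow> real" where
  "block_moment L A B = (\<Sum>p\<in>A. \<Sum>q\<in>B. pair_moment L p q)"

lemma pair_moment_commute: "pair_moment L p q = pair_moment L q p"
  unfolding pair_moment_def by (simp add: add_mset_commute)

lemma block_moment_commute: "block_moment L A B = block_moment L B A"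
  unfolding block_moment_def by (subst sum.swap) (simp add: pair_moment_commute)

lemma finite_monomials_upto: "finite I \<Longrightarrow> finite (monomials_upto I d)"
proof -
  assume "finite I"
  have "monomials_upto I d \<subseteq> mset ` {xs. set xs \<subseteq> I \<and> length xs \<le> d}"
  proof
    fix m assume "m \<in> monomials_upto I d"
    moreover obtain xs where "mset xs = m" using ex_mset by blast
    ultimately show "m \<in> mset ` {xs. set xs \<subseteq> I \<and> length xs \<le> d}"
      unfolding monomials_upto_def by auto
  qed
  then show ?thesis using finite_lists_length_le[OF \<open>finite I\<close>] finite_surj by blast
qed

text \<open>This is \<open>L(P\<^sup>2) \<ge> 0\<close> for \<open>P = \<Sum>\<^sub>p \<phi> p * x\<^bsub>fst p\<^esub> * x\<^bsub>snd p\<^esub>\<close>, whose coefficient on a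
  monomial \<open>m\<close> collects \<open>\<phi> p\<close> over all \<open>p\<close> with \<open>{#fst p, snd p#} = m\<close>.\<close>
lemma pseudo_exp4_quadratic_form_nonneg:
  fixes L :: "'v multiset \<Rightarrow> real"
  assumes "finite I" "pseudo_exp4 I L"
  shows "0 \<le> (\<Sum>p\<in>I\<times>I. \<Sum>q\<in>I\<times>I. \<phi> p * \<phi> q * pair_moment L p q)"
proof -
  define M where "M = monomials_upto I 2"
  define mon where "mon p = {#fst p, snd p#}" for p :: "'v \<times> 'v"
  define c where "c m = (\<Sum>p\<in>{p\<in>I\<times>I. mon p = m}. \<phi> p)" for m
  have fin: "finite M" "finite (I \<times> I)" unfolding M_def using assms(1) finite_monomials_upto by auto
  have img: "mon ` (I \<times> I) \<subseteq> M" unfolding M_def monomials_upto_def mon_def by auto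
  have "0 \<le> (\<Sum>m1\<in>M. \<Sum>m2\<in>M. c m1 * c m2 * L (m1 + m2))"
    using assms(2) unfolding pseudo_exp4_def M_def by blast
  also have "\<dots> = (\<Sum>m1\<in>M. c m1 * (\<Sum>m2\<in>M. c m2 * L (m2 + m1)))"
    by (simp add: sum_distrib_left mult.assoc add.commute)
  also have "\<dots> = (\<Sum>p\<in>I\<times>I. \<phi> p * (\<Sum>q\<in>I\<times>I. \<phi> q * L (mon q + mon p)))"
    unfolding c_def by (simp add: sum_fibres_mult[OF fin(2,1) img])
  also have "\<dots> = (\<Sum>p\<in>I\<times>I. \<Sum>q\<in>I\<times>I. \<phi> p * \<phi> q * pair_moment L p q)"
    unfolding pair_moment_def mon_def by (simp add: sum_distrib_left mult.assoc add_mset_commute)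
  finally show ?thesis .
qed

lemma block_moment_quadratic_nonneg:
  fixes L :: "'v multiset \<Rightarrow> real"
  assumes "finite I" "pseudo_exp4 I L" "A \<subseteq> I \<times> I" "B \<subseteq> I \<times> I"
  shows "0 \<le> x * x * block_moment L A A + 2 * x * y * block_moment L A B + y * y * block_moment L B B"
proof -
  let ?Z = "I \<times> I"
  have restrict: "(\<Sum>p\<in>?Z. of_bool (p \<in> C) * f p) = sum f C" if "C \<subseteq> ?Z"
    for C and f :: "'v \<times> 'v \<Rightarrow> real"
  proof -
    have "(\<Sum>p\<in>?Z. of_bool (p \<in> C) * f p) = (\<Sum>p\<in>?Z. if p \<in> C then f p else 0)"
      by (intro sum.cong) auto
    also have "\<dots> = sum f C"
      using that assms(1) by (simp add: sum.inter_restrict[symmetric] Int_absorb1)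
    finally show ?thesis .
  qed
  have block: "(\<Sum>p\<in>?Z. \<Sum>q\<in>?Z. of_bool (p \<in> C) * of_bool (q \<in> D) * pair_moment L p q)
      = block_moment L C D" if "C \<subseteq> ?Z" "D \<subseteq> ?Z" for C D
    unfolding block_moment_def using that
    by (simp add: mult.assoc sum_distrib_left[symmetric] restrict)
  define \<phi> where "\<phi> p = x * of_bool (p \<in> A) + y * of_bool (p \<in> B)" for p
  have expand: "\<phi> p * \<phi> q * m = x * x * (of_bool (p \<in> A) * of_bool (q \<in> A) * m)
      + x * y * (of_bool (p \<in> A) * of_bool (q \<in> B) * m)
      + y * x * (of_bool (p \<in> B) * of_bool (q \<in> A) * m)
      + y * y * (of_bool (p \<in> B) * of_bool (q \<in> B) * m)" for p q m
    unfolding \<phi>_def by (simp add: algebra_simps)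
  have "0 \<le> (\<Sum>p\<in>?Z. \<Sum>q\<in>?Z. \<phi> p * \<phi> q * pair_moment L p q)"
    by (rule pseudo_exp4_quadratic_form_nonneg[OF assms(1,2)])
  also have "\<dots> = x * x * block_moment L A A + x * y * block_moment L A B
      + y * x * block_moment L B A + y * y * block_moment L B B"
    unfolding expand sum.distrib sum_distrib_left[symmetric] using assms(3,4) by (simp add: block)
  finally show ?thesis by (simp add: block_moment_commute[of L B A] algebra_simps)
qed

lemma block_moment_diag_nonneg:
  assumes "finite I" "pseudo_exp4 I L" "A \<subseteq> I \<times> I"
  shows "0 \<le> block_moment L A A"
  using block_moment_quadratic_nonneg[OF assms assms(3), of 1 0] by simp

lemma block_moment_abs_le:
  assumes "finite I" "pseudo_exp4 I L" "A \<subseteq> I \<times> I" "B \<subseteq> I \<times> I" "\<eta> > 0"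
  shows "2 * \<bar>block_moment L A B\<bar> \<le> \<eta> * block_moment L A A + block_moment L B B / \<eta>"
proof -
  have "0 \<le> \<eta> * \<eta> * block_moment L A A + 2 * \<eta> * s * block_moment L A B + s * s * block_moment L B B"
    for s by (rule block_moment_quadratic_nonneg[OF assms(1-4)])
  from this[of 1] this[of "-1"]
  have "\<eta> * (2 * \<bar>block_moment L A B\<bar>) \<le> \<eta> * \<eta> * block_moment L A A + block_moment L B B"
    by (cases "block_moment L A B \<ge> 0") (simp_all add: algebra_simps)
  then show ?thesis using \<open>\<eta> > 0\<close> by (simp add: field_simps)
qed

lemma pseudo_exp4_square_nonneg:
  assumes "finite I" "pseudo_exp4 I L" "a \<in> I" "b \<in> I"
  shows "0 \<le> L {#a, a, b, b#}"
  using block_moment_diag_nonneg[OF assms(1,2), of "{(a, b)}"] assms(3,4)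
  by (simp add: block_moment_def pair_moment_def add_mset_commute)

text \<open>Regroup \<open>x\<^sub>a x\<^sub>b x\<^sub>c x\<^sub>d\<close> for \<open>p = (a, b)\<close>, \<open>q = (c, d)\<close> as \<open>(x\<^sub>a x\<^sub>d) (x\<^sub>c x\<^sub>b)\<close> and apply the
  pseudo Cauchy-Schwarz inequality \<open>2 L(X Y) \<le> L(X\<^sup>2) + L(Y\<^sup>2)\<close>.\<close>
lemma block_moment_diag_le:
  assumes "finite I" "pseudo_exp4 I L" "P \<subseteq> I \<times> I"
  shows "block_moment L P P \<le> (\<Sum>p\<in>P. \<Sum>q\<in>P. L {#fst p, fst p, snd q, snd q#})"
proof -
  have "2 * pair_moment L p q \<le> L {#fst p, fst p, snd q, snd q#} + L {#fst q, fst q, snd p, snd p#}"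
    if "p \<in> P" "q \<in> P" for p q
  proof -
    have "2 * \<bar>block_moment L {(fst p, snd q)} {(fst q, snd p)}\<bar>
        \<le> 1 * block_moment L {(fst p, snd q)} {(fst p, snd q)}
          + block_moment L {(fst q, snd p)} {(fst q, snd p)} / 1"
      using that assms by (intro block_moment_abs_le) auto
    then show ?thesis
      by (simp add: block_moment_def pair_moment_def add_mset_commute)
  qed
  then have "2 * block_moment L P P \<le> (\<Sum>p\<in>P. \<Sum>q\<in>P.
      L {#fst p, fst p, snd q, snd q#} + L {#fst q, fst q, snd p, snd p#})"
    unfolding block_moment_def sum_distrib_left by (intro sum_mono) auto
  also have "\<dots> = 2 * (\<Sum>p\<in>P. \<Sum>q\<in>P. L {#fst p, fst p, snd q, snd q#})"
    using sum.swap[of "\<lambda>p q. L {#fst q, fst q, snd p, snd p#}" P P] by (simp add: sum.distrib)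
  finally show ?thesis by simp
qed

lemma pE_tau_nonneg:
  assumes "finite I" "pseudo_exp4 I L"
  shows "0 \<le> pE_tau R I L"
  unfolding pE_tau_def by (intro sum_nonneg) (auto intro: pseudo_exp4_square_nonneg[OF assms])

section \<open>Fourth moments of the ensembles\<close>

definition xor_balanced :: "(nat \<Rightarrow> nat) \<Rightarrow> nat \<Rightarrow> nat \<Rightarrow> nat \<Rightarrow> nat \<Rightarrow> bool" where
  "xor_balanced \<sigma> a b c d \<longleftrightarrow> \<sigma> a XOR \<sigma> b = \<sigma> c XOR \<sigma> d"

definition even_multiplicities :: "nat \<Rightarrow> nat \<Rightarrow> nat \<Rightarrow> nat \<Rightarrow> bool" where
  "even_multiplicities a b c d \<longleftrightarrow> (\<forall>j. j \<noteq> 0 \<longrightarrow> even (count {#a, b, c, d#} j))"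

lemma even_multiplicities_pairs:
  assumes "even_multiplicities a b c d"
  shows "(a = b \<and> c = d) \<or> (a = c \<and> b = d) \<or> (a = d \<and> b = c)"
proof -
  have "\<And>j. j \<noteq> 0 \<Longrightarrow> even (count {#a, b, c, d#} j)"
    using assms unfolding even_multiplicities_def by blast
  from this[of a] this[of b] this[of c] this[of d] show ?thesis
    by (cases "a = 0"; cases "b = 0"; cases "c = 0"; cases "d = 0") (auto split: if_splits)
qed

lemma even_multiplicities_imp_xor_balanced:
  "even_multiplicities a b c d \<Longrightarrow> xor_balanced \<sigma> a b c d"
  using even_multiplicities_pairs[of a b c d] unfolding xor_balanced_def by (auto simp: xor.commute)

lemma mean_X_coordinate:
  assumes "\<sigma> permutes {0..<2^t}" "a < 2^t" "b < 2^t" "c < 2^t" "d < 2^t"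
  shows "(\<Sum>x\<in>{0..<2^t}. gf2_char t (\<sigma> a) x * gf2_char t (\<sigma> b) x * gf2_char t (\<sigma> c) x
            * gf2_char t (\<sigma> d) x) / 2^t = (if xor_balanced \<sigma> a b c d then 1 else 0)"
proof -
  let ?w = "\<sigma> a XOR \<sigma> b XOR \<sigma> c XOR \<sigma> d"
  have "?w < 2^t"
    using assms permutes_in_image[OF assms(1)] by (simp add: xor_less_two_power)
  moreover have "?w = 0 \<longleftrightarrow> xor_balanced \<sigma> a b c d"
    unfolding xor_balanced_def by (metis xor_eq_0_iff xor.assoc)
  ultimately show ?thesis
    by (simp add: gf2_char_xor_index xor.assoc sum_gf2_char)
qed

definition Y_coord_val :: "(nat \<Rightarrow> real) \<Rightarrow> nat \<Rightarrow> real" where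
  "Y_coord_val z i = (if i = 0 then 1 else z i)"

lemma Y_val_eq: "Y_val y r = Y_coord_val (y r)"
  unfolding Y_val_def Y_coord_val_def by auto

lemma mean_Y_coordinate:
  assumes "a < k" "b < k" "c < k" "d < k"
  shows "(\<Sum>z\<in>{1..<k} \<rightarrow>\<^sub>E {-1,1}. Y_coord_val z a * Y_coord_val z b * Y_coord_val z c
            * Y_coord_val z d) / 2 ^ (k - 1) = (if even_multiplicities a b c d then 1 else 0)"
proof (cases "even_multiplicities a b c d")
  case True
  have "Y_coord_val z a * Y_coord_val z b * Y_coord_val z c * Y_coord_val z d = 1"
    if z: "z \<in> {1..<k} \<rightarrow>\<^sub>E {-1,1}" for z
  proof -
    have "Y_coord_val z x * Y_coord_val z x = 1" if "x < k" for x
    proof (cases "x = 0")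
      case False
      then have "z x \<in> {-1, 1}" using that z by auto
      then show ?thesis using False by (auto simp: Y_coord_val_def)
    qed (simp add: Y_coord_val_def)
    with even_multiplicities_pairs[OF True] assms show ?thesis
      by (auto simp: mult_ac)
  qed
  then have "(\<Sum>z\<in>{1..<k} \<rightarrow>\<^sub>E {-1,1}. Y_coord_val z a * Y_coord_val z b * Y_coord_val z c
      * Y_coord_val z d) = card ({1..<k} \<rightarrow>\<^sub>E {-1::real, 1})"
    by simp
  also have "\<dots> = 2 ^ (k - 1)" by (simp add: card_PiE)
  finally show ?thesis using True by simp
next
  case False
  then obtain j where j: "j \<noteq> 0" "odd (count {#a, b, c, d#} j)"
    unfolding even_multiplicities_def by auto
  then have "j \<in> {1..<k}" using assms by (auto split: if_splits)
  text \<open>Flipping the sign of the coordinate \<open>j\<close>, which occurs an odd number of times,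
    is an involution of the sample space that negates the summand.\<close>
  let ?S = "{1..<k} \<rightarrow>\<^sub>E {-1::real, 1}"
  let ?flip = "\<lambda>z::nat \<Rightarrow> real. z(j := - z j)"
  let ?G = "\<lambda>z. Y_coord_val z a * Y_coord_val z b * Y_coord_val z c * Y_coord_val z d"
  have "?G (?flip z) = (-1) ^ count {#a, b, c, d#} j * ?G z" for z
    using j(1) by (simp add: Y_coord_val_def power_add)
  then have flip: "?G (?flip z) = - ?G z" for z using j(2) by simp
  have "sum ?G ?S = sum (\<lambda>z. ?G (?flip z)) ?S"
    by (rule sum.reindex_bij_witness[of _ ?flip ?flip])
      (use \<open>j \<in> {1..<k}\<close> in \<open>auto simp: PiE_iff extensional_def\<close>)
  also have "\<dots> = - sum ?G ?S" by (simp add: flip sum_negf)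
  finally show ?thesis using False by simp
qed

definition xor_compatible :: "(nat \<Rightarrow> nat) \<Rightarrow> nat \<Rightarrow> (nat \<Rightarrow> nat) \<times> (nat \<Rightarrow> nat)
    \<Rightarrow> (nat \<Rightarrow> nat) \<times> (nat \<Rightarrow> nat) \<Rightarrow> bool" where
  "xor_compatible \<sigma> R u v \<longleftrightarrow> (\<forall>r<R. xor_balanced \<sigma> (fst u r) (snd u r) (fst v r) (snd v r))"

definition even_compatible :: "nat \<Rightarrow> (nat \<Rightarrow> nat) \<times> (nat \<Rightarrow> nat)
    \<Rightarrow> (nat \<Rightarrow> nat) \<times> (nat \<Rightarrow> nat) \<Rightarrow> bool" where
  "even_compatible R u v \<longleftrightarrow> (\<forall>r<R. even_multiplicities (fst u r) (snd u r) (fst v r) (snd v r))"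

lemma even_compatible_imp_xor_compatible:
  "even_compatible R u v \<Longrightarrow> xor_compatible \<sigma> R u v"
  unfolding even_compatible_def xor_compatible_def by (simp add: even_multiplicities_imp_xor_balanced)

lemma xor_compatible_commute: "xor_compatible \<sigma> R u v = xor_compatible \<sigma> R v u"
  unfolding xor_compatible_def xor_balanced_def by auto

lemma mean_X_monomial_product:
  assumes \<sigma>: "\<sigma> permutes {0..<2^t}"
    and bounded: "\<And>r. r < R \<Longrightarrow> \<alpha> r < 2^t \<and> \<beta> r < 2^t \<and> \<gamma> r < 2^t \<and> \<delta> r < 2^t"
  shows "(\<Sum>x\<in>X_space t R. mono_val R (X_val t \<sigma> x) \<alpha> * mono_val R (X_val t \<sigma> x) \<beta>
             * mono_val R (X_val t \<sigma> x) \<gamma> * mono_val R (X_val t \<sigma> x) \<delta>) / card (X_space t R)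
       = (if xor_compatible \<sigma> R (\<alpha>, \<beta>) (\<gamma>, \<delta>) then 1 else 0)"
proof -
  define F where "F r v = gf2_char t (\<sigma> (\<alpha> r)) v * gf2_char t (\<sigma> (\<beta> r)) v
     * gf2_char t (\<sigma> (\<gamma> r)) v * gf2_char t (\<sigma> (\<delta> r)) v" for r v
  have "mono_val R (X_val t \<sigma> x) \<alpha> * mono_val R (X_val t \<sigma> x) \<beta>
      * mono_val R (X_val t \<sigma> x) \<gamma> * mono_val R (X_val t \<sigma> x) \<delta> = (\<Prod>r\<in>{0..<R}. F r (x r))" for x
    unfolding mono_val_def X_val_def F_def by (simp add: prod.distrib atLeast0LessThan)
  then have "(\<Sum>x\<in>X_space t R. mono_val R (X_val t \<sigma> x) \<alpha> * mono_val R (X_val t \<sigma> x) \<beta>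
      * mono_val R (X_val t \<sigma> x) \<gamma> * mono_val R (X_val t \<sigma> x) \<delta>) / card (X_space t R)
      = (\<Prod>r\<in>{0..<R}. (\<Sum>v\<in>{0..<2^t}. F r v) / 2 ^ t)"
    unfolding X_space_def by (simp add: mean_PiE_prod)
  also have "\<dots> = (\<Prod>r\<in>{0..<R}. if xor_balanced \<sigma> (\<alpha> r) (\<beta> r) (\<gamma> r) (\<delta> r) then 1 else 0)"
    unfolding F_def using bounded by (intro prod.cong refl mean_X_coordinate[OF \<sigma>]) auto
  finally show ?thesis by (simp add: prod_indicator_eq xor_compatible_def)
qed

lemma mean_Y_monomial_product:
  assumes bounded: "\<And>r. r < R \<Longrightarrow> \<alpha> r < k \<and> \<beta> r < k \<and> \<gamma> r < k \<and> \<delta> r < k"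
  shows "(\<Sum>y\<in>Y_space k R. mono_val R (Y_val y) \<alpha> * mono_val R (Y_val y) \<beta>
             * mono_val R (Y_val y) \<gamma> * mono_val R (Y_val y) \<delta>) / card (Y_space k R)
       = (if even_compatible R (\<alpha>, \<beta>) (\<gamma>, \<delta>) then 1 else 0)"
proof -
  define F where "F r z = Y_coord_val z (\<alpha> r) * Y_coord_val z (\<beta> r)
     * Y_coord_val z (\<gamma> r) * Y_coord_val z (\<delta> r)" for r z
  have "mono_val R (Y_val y) \<alpha> * mono_val R (Y_val y) \<beta>
      * mono_val R (Y_val y) \<gamma> * mono_val R (Y_val y) \<delta> = (\<Prod>r\<in>{0..<R}. F r (y r))" for y
    unfolding mono_val_def Y_val_eq F_def by (simp add: prod.distrib atLeast0LessThan)
  then have "(\<Sum>y\<in>Y_space k R. mono_val R (Y_val y) \<alpha> * mono_val R (Y_val y) \<beta>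
      * mono_val R (Y_val y) \<gamma> * mono_val R (Y_val y) \<delta>) / card (Y_space k R)
      = (\<Prod>r\<in>{0..<R}. (\<Sum>z\<in>{1..<k} \<rightarrow>\<^sub>E {-1,1}. F r z) / 2 ^ (k - 1))"
    unfolding Y_space_def
    using mean_PiE_prod[of "{0..<R}" "{1..<k} \<rightarrow>\<^sub>E {-1::real, 1}" F] by (simp add: card_PiE finite_PiE)
  also have "\<dots> = (\<Prod>r\<in>{0..<R}. if even_multiplicities (\<alpha> r) (\<beta> r) (\<gamma> r) (\<delta> r) then 1 else 0)"
    unfolding F_def using bounded by (intro prod.cong refl mean_Y_coordinate) auto
  finally show ?thesis by (simp add: prod_indicator_eq even_compatible_def)
qed

lemma multi_indices_less: "\<alpha> \<in> multi_indices k R l \<Longrightarrow> r < R \<Longrightarrow> \<alpha> r < k"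
  unfolding multi_indices_def by auto

lemma multi_indices_eq_0: "\<alpha> \<in> multi_indices k R l \<Longrightarrow> R \<le> r \<Longrightarrow> \<alpha> r = 0"
  unfolding multi_indices_def by auto

lemma multi_indices_card_support: "\<alpha> \<in> multi_indices k R l \<Longrightarrow> card {r. r < R \<and> \<alpha> r \<noteq> 0} \<le> l"
  unfolding multi_indices_def by auto

lemma finite_multi_indices: "finite (multi_indices k R l)"
proof -
  have "multi_indices k R l \<subseteq> (\<lambda>f r. if r < R then f r else 0) ` ({0..<R} \<rightarrow>\<^sub>E {0..<k})"
  proof
    fix \<alpha> assume \<alpha>: "\<alpha> \<in> multi_indices k R l"
    then have "\<alpha> = (\<lambda>r. if r < R then restrict \<alpha> {0..<R} r else 0)"
      by (auto simp: fun_eq_iff multi_indices_eq_0)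
    moreover have "restrict \<alpha> {0..<R} \<in> {0..<R} \<rightarrow>\<^sub>E {0..<k}"
      using \<alpha> by (auto simp: multi_indices_less)
    ultimately show "\<alpha> \<in> (\<lambda>f r. if r < R then f r else 0) ` ({0..<R} \<rightarrow>\<^sub>E {0..<k})" by blast
  qed
  then show ?thesis by (rule finite_subset) (auto intro!: finite_PiE)
qed

lemma pE_moment4_X_eq:
  assumes "\<sigma> permutes {0..<2^t}"
  shows "pE_moment4 R (multi_indices (2^t) R l) L (X_space t R) (X_val t \<sigma>)
    = (\<Sum>p\<in>multi_indices (2^t) R l \<times> multi_indices (2^t) R l.
       \<Sum>q\<in>multi_indices (2^t) R l \<times> multi_indices (2^t) R l.
         of_bool (xor_compatible \<sigma> R p q) * pair_moment L p q)"
  unfolding pE_moment4_def pair_moment_def sum4_eq_sum_pairs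
  by (intro sum.cong refl, subst mean_X_monomial_product[OF assms]) (auto simp: multi_indices_less)

lemma pE_moment4_Y_eq:
  "pE_moment4 R (multi_indices k R l) L (Y_space k R) Y_val
    = (\<Sum>p\<in>multi_indices k R l \<times> multi_indices k R l. \<Sum>q\<in>multi_indices k R l \<times> multi_indices k R l.
         of_bool (even_compatible R p q) * pair_moment L p q)"
  unfolding pE_moment4_def pair_moment_def sum4_eq_sum_pairs
  by (intro sum.cong refl, subst mean_Y_monomial_product) (auto simp: multi_indices_less)

section \<open>Cancellation classes\<close>

text \<open>Under both ensembles \<open>Z\<^bsub>r,i\<^esub>\<^sup>2 = 1\<close>, so the product of the monomials of \<open>\<alpha>\<close> and \<open>\<beta>\<close> only
  depends on the coordinates where they differ; \<open>cancel_common (\<alpha>, \<beta>)\<close> records exactly these.\<close>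
definition cancel_common :: "(nat \<Rightarrow> nat) \<times> (nat \<Rightarrow> nat) \<Rightarrow> (nat \<Rightarrow> nat) \<times> (nat \<Rightarrow> nat)" where
  "cancel_common p =
     (\<lambda>r. if fst p r = snd p r then 0 else fst p r, \<lambda>r. if fst p r = snd p r then 0 else snd p r)"

lemma fst_cancel_common: "fst (cancel_common p) r = (if fst p r = snd p r then 0 else fst p r)"
  and snd_cancel_common: "snd (cancel_common p) r = (if fst p r = snd p r then 0 else snd p r)"
  unfolding cancel_common_def by simp_all

definition cancel_class :: "(nat \<Rightarrow> nat) set \<Rightarrow> (nat \<Rightarrow> nat) \<times> (nat \<Rightarrow> nat) \<Rightarrow> ((nat \<Rightarrow> nat) \<times> (nat \<Rightarrow> nat)) set" where
  "cancel_class I u = {p \<in> I \<times> I. cancel_common p = u}"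

definition heavy_at :: "nat \<Rightarrow> (nat \<Rightarrow> nat) \<times> (nat \<Rightarrow> nat) \<Rightarrow> bool" where
  "heavy_at r u \<longleftrightarrow> fst u r \<noteq> 0 \<and> snd u r \<noteq> 0"

lemma xor_balanced_cancel:
  assumes "\<sigma> 0 = 0"
  shows "xor_balanced \<sigma> (if a = b then 0 else a) (if a = b then 0 else b)
      (if c = d then 0 else c) (if c = d then 0 else d) = xor_balanced \<sigma> a b c d"
  unfolding xor_balanced_def using assms by (cases "a = b"; cases "c = d") simp_all

lemma even_multiplicities_cancel:
  "even_multiplicities (if a = b then 0 else a) (if a = b then 0 else b)
      (if c = d then 0 else c) (if c = d then 0 else d) = even_multiplicities a b c d"
  unfolding even_multiplicities_def by (cases "a = b"; cases "c = d") auto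

lemma xor_compatible_cancel_common:
  "\<sigma> 0 = 0 \<Longrightarrow> xor_compatible \<sigma> R (cancel_common p) (cancel_common q) = xor_compatible \<sigma> R p q"
  unfolding xor_compatible_def cancel_common_def by (simp add: xor_balanced_cancel)

lemma even_compatible_cancel_common:
  "even_compatible R (cancel_common p) (cancel_common q) = even_compatible R p q"
  unfolding even_compatible_def cancel_common_def by (simp add: even_multiplicities_cancel)

lemma pE_moment4_diff_eq:
  fixes t R l :: nat and L :: "(nat \<Rightarrow> nat) multiset \<Rightarrow> real"
  assumes "\<sigma> permutes {0..<2^t}" "\<sigma> 0 = 0"
  defines "I \<equiv> multi_indices (2^t) R l"
  shows "pE_moment4 R I L (X_space t R) (X_val t \<sigma>) - pE_moment4 R I L (Y_space (2^t) R) Y_val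
    = (\<Sum>u\<in>cancel_common ` (I \<times> I). \<Sum>v\<in>cancel_common ` (I \<times> I).
         (of_bool (xor_compatible \<sigma> R u v) - of_bool (even_compatible R u v))
         * block_moment L (cancel_class I u) (cancel_class I v))"
proof -
  have "pE_moment4 R I L (X_space t R) (X_val t \<sigma>) - pE_moment4 R I L (Y_space (2^t) R) Y_val
    = (\<Sum>p\<in>I \<times> I. \<Sum>q\<in>I \<times> I. (of_bool (xor_compatible \<sigma> R (cancel_common p) (cancel_common q))
         - of_bool (even_compatible R (cancel_common p) (cancel_common q))) * pair_moment L p q)"
    unfolding I_def pE_moment4_X_eq[OF assms(1)] pE_moment4_Y_eq
      xor_compatible_cancel_common[of \<sigma>, OF assms(2)] even_compatible_cancel_common
    by (simp add: sum_subtractf[symmetric] left_diff_distrib)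
  also have "\<dots> = (\<Sum>u\<in>cancel_common ` (I \<times> I). \<Sum>v\<in>cancel_common ` (I \<times> I).
         (of_bool (xor_compatible \<sigma> R u v) - of_bool (even_compatible R u v))
         * block_moment L (cancel_class I u) (cancel_class I v))"
    unfolding block_moment_def cancel_class_def I_def
    by (rule sum_sum_group_by_image) (simp add: finite_multi_indices)
  finally show ?thesis .
qed

lemma xor_balanced_not_even_imp:
  assumes "inj \<sigma>" "\<sigma> 0 = 0" "xor_balanced \<sigma> a b c d" "\<not> even_multiplicities a b c d"
  shows "(a \<noteq> 0 \<and> b \<noteq> 0) \<or> (c \<noteq> 0 \<and> d \<noteq> 0)"
proof (rule ccontr)
  assume "\<not> ?thesis"
  then have "a = 0 \<or> b = 0" "c = 0 \<or> d = 0" by auto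
  text \<open>The two remaining entries have equal images under \<open>\<sigma>\<close>, hence coincide.\<close>
  then have "even_multiplicities a b c d"
    using assms(1-3) unfolding xor_balanced_def even_multiplicities_def
    by (elim disjE) (auto simp: inj_eq)
  with assms(4) show False by contradiction
qed

lemma xor_not_even_imp_heavy:
  assumes "inj \<sigma>" "\<sigma> 0 = 0" "xor_compatible \<sigma> R u v" "\<not> even_compatible R u v"
  shows "\<exists>r<R. heavy_at r u \<or> heavy_at r v"
proof -
  obtain r where r: "r < R" "\<not> even_multiplicities (fst u r) (snd u r) (fst v r) (snd v r)"
    using assms(4) unfolding even_compatible_def by auto
  moreover have "xor_balanced \<sigma> (fst u r) (snd u r) (fst v r) (snd v r)"
    using assms(3) r(1) unfolding xor_compatible_def by auto
  ultimately show ?thesis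
    using xor_balanced_not_even_imp[OF assms(1,2)] unfolding heavy_at_def by blast
qed

lemma heavy_at_cancel_class:
  assumes "heavy_at r u" "p \<in> cancel_class I u" "q \<in> cancel_class I u"
  shows "fst p r \<noteq> 0" "snd q r \<noteq> 0"
proof -
  have "fst (cancel_common p) r \<noteq> 0" "snd (cancel_common q) r \<noteq> 0"
    using assms unfolding heavy_at_def cancel_class_def by auto
  then show "fst p r \<noteq> 0" "snd q r \<noteq> 0"
    unfolding fst_cancel_common snd_cancel_common by (auto split: if_splits)
qed

lemma cancel_common_eq_imp_0:
  "fst (cancel_common p) r = snd (cancel_common p) r
    \<Longrightarrow> fst (cancel_common p) r = 0 \<and> snd (cancel_common p) r = 0"
  unfolding cancel_common_def by (auto split: if_splits)

lemma cancel_common_multi_indices: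
  assumes "p \<in> multi_indices k R l \<times> multi_indices k R l" "0 < k"
  shows "fst (cancel_common p) r < k"
    and "R \<le> r \<Longrightarrow> fst (cancel_common p) r = 0 \<and> snd (cancel_common p) r = 0"
proof -
  have outside: "fst p r = 0 \<and> snd p r = 0" if "R \<le> r"
    using assms(1) that by (auto simp: multi_indices_eq_0 mem_Times_iff)
  then show "R \<le> r \<Longrightarrow> fst (cancel_common p) r = 0 \<and> snd (cancel_common p) r = 0"
    unfolding cancel_common_def by simp
  show "fst (cancel_common p) r < k"
  proof (cases "r < R")
    case True
    then show ?thesis using assms unfolding cancel_common_def by (auto simp: multi_indices_less)
  next
    case False
    then show ?thesis using outside assms(2) unfolding cancel_common_def by simp
  qed
qed

section \<open>Counting\<close>

lemma differ_multi_indices: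
  assumes "a \<in> multi_indices k R l" "b \<in> multi_indices k R l"
  shows "finite {r. a r \<noteq> b r}" "card {r. a r \<noteq> b r} \<le> 2 * l"
proof -
  have "r < R" if "a r \<noteq> b r" for r
    using that multi_indices_eq_0[OF assms(1), of r] multi_indices_eq_0[OF assms(2), of r] by linarith
  then have sub: "{r. a r \<noteq> b r} \<subseteq> {r. r < R \<and> a r \<noteq> 0} \<union> {r. r < R \<and> b r \<noteq> 0}"
    by auto
  then show "finite {r. a r \<noteq> b r}" by (rule finite_subset) auto
  have "card {r. a r \<noteq> b r} \<le> card ({r. r < R \<and> a r \<noteq> 0} \<union> {r. r < R \<and> b r \<noteq> 0})"
    using sub by (intro card_mono) auto
  also have "\<dots> \<le> card {r. r < R \<and> a r \<noteq> 0} + card {r. r < R \<and> b r \<noteq> 0}" by (rule card_Un_le)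
  also have "\<dots> \<le> l + l"
    using multi_indices_card_support[OF assms(1)] multi_indices_card_support[OF assms(2)]
    by (rule add_mono)
  finally show "card {r. a r \<noteq> b r} \<le> 2 * l" by simp
qed

definition same_class_pairs :: "(nat \<Rightarrow> nat) set
    \<Rightarrow> (((nat \<Rightarrow> nat) \<times> (nat \<Rightarrow> nat)) \<times> ((nat \<Rightarrow> nat) \<times> (nat \<Rightarrow> nat))) set" where
  "same_class_pairs I = {(p, q). p \<in> I \<times> I \<and> q \<in> I \<times> I \<and> cancel_common p = cancel_common q}"

lemma sum_cancel_classes_eq:
  assumes "finite I"
  shows "(\<Sum>u\<in>cancel_common ` (I \<times> I). \<Sum>p\<in>cancel_class I u. \<Sum>q\<in>cancel_class I u. h p q)
    = (\<Sum>x\<in>same_class_pairs I. h (fst x) (snd x))"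
proof -
  have "(\<Sum>u\<in>cancel_common ` (I \<times> I). \<Sum>p\<in>cancel_class I u. \<Sum>q\<in>cancel_class I u. h p q)
      = (\<Sum>u\<in>cancel_common ` (I \<times> I). \<Sum>p\<in>cancel_class I u.
           \<Sum>q\<in>cancel_class I (cancel_common p). h p q)"
    by (intro sum.cong refl) (auto simp: cancel_class_def)
  also have "\<dots> = (\<Sum>p\<in>I \<times> I. \<Sum>q\<in>cancel_class I (cancel_common p). h p q)"
    unfolding cancel_class_def by (rule sum.group) (use assms in auto)
  also have "\<dots> = (\<Sum>x\<in>Sigma (I \<times> I) (\<lambda>p. cancel_class I (cancel_common p)). h (fst x) (snd x))"
    using assms by (subst sum.Sigma) (auto simp: cancel_class_def split_def)
  also have "Sigma (I \<times> I) (\<lambda>p. cancel_class I (cancel_common p)) = same_class_pairs I"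
    unfolding same_class_pairs_def cancel_class_def by auto
  finally show ?thesis .
qed

text \<open>Two pairs in the same class with \<open>fst p = a\<close> and \<open>snd q = b\<close> are determined by the set of
  coordinates where the entries of \<open>p\<close> differ, which lies inside the at most \<open>2 l\<close> coordinates
  where \<open>a\<close> and \<open>b\<close> differ.\<close>
lemma card_same_class_pairs_le:
  assumes "a \<in> multi_indices k R l" "b \<in> multi_indices k R l"
  shows "card {x \<in> same_class_pairs (multi_indices k R l). fst (fst x) = a \<and> snd (snd x) = b} \<le> 4 ^ l"
proof -
  let ?D = "{r. a r \<noteq> b r}"
  let ?pairs = "\<lambda>D. ((a, \<lambda>r. if r \<in> D then b r else a r), (\<lambda>r. if r \<in> D then a r else b r, b))"
  have "{x \<in> same_class_pairs (multi_indices k R l). fst (fst x) = a \<and> snd (snd x) = b}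
      \<subseteq> ?pairs ` Pow ?D"
  proof
    fix x assume x: "x \<in> {x \<in> same_class_pairs (multi_indices k R l). fst (fst x) = a \<and> snd (snd x) = b}"
    then obtain \<beta> \<gamma> where x_eq: "x = ((a, \<beta>), (\<gamma>, b))" by (cases x) auto
    with x have "cancel_common (a, \<beta>) = cancel_common (\<gamma>, b)"
      unfolding same_class_pairs_def by simp
    then have "fst (cancel_common (a, \<beta>)) r = fst (cancel_common (\<gamma>, b)) r
        \<and> snd (cancel_common (a, \<beta>)) r = snd (cancel_common (\<gamma>, b)) r" for r
      by simp
    then have coord: "(if a r = \<beta> r then 0 else a r) = (if \<gamma> r = b r then 0 else \<gamma> r)
        \<and> (if a r = \<beta> r then 0 else \<beta> r) = (if \<gamma> r = b r then 0 else b r)" for r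
      unfolding cancel_common_def by (simp only: fst_conv snd_conv)
    have "a r \<noteq> b r" if "a r \<noteq> \<beta> r" for r
      using that coord[of r] by (auto split: if_splits)
    then have "{r. a r \<noteq> \<beta> r} \<in> Pow ?D" by auto
    moreover have "\<beta> r = (if a r \<noteq> \<beta> r then b r else a r) \<and> \<gamma> r = (if a r \<noteq> \<beta> r then a r else b r)" for r
      using coord[of r] by (auto split: if_splits)
    then have "((a, \<beta>), (\<gamma>, b)) = ?pairs {r. a r \<noteq> \<beta> r}"
      by (simp add: fun_eq_iff)
    ultimately show "x \<in> ?pairs ` Pow ?D" unfolding x_eq by blast
  qed
  then have "card {x \<in> same_class_pairs (multi_indices k R l). fst (fst x) = a \<and> snd (snd x) = b}
      \<le> card (Pow ?D)"
    using differ_multi_indices(1)[OF assms] by (meson card_image_le finite_Pow_iff le_trans card_mono finite_imageI)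
  also have "\<dots> = 2 ^ card ?D" using differ_multi_indices(1)[OF assms] by (simp add: card_Pow)
  also have "\<dots> \<le> 2 ^ (2 * l)" using differ_multi_indices(2)[OF assms] by (intro power_increasing) auto
  finally show ?thesis by (simp add: power_mult)
qed

lemma sum_same_class_pairs_le:
  fixes g :: "(nat \<Rightarrow> nat) \<Rightarrow> (nat \<Rightarrow> nat) \<Rightarrow> real"
  assumes "J \<subseteq> multi_indices k R l" "\<And>a b. a \<in> J \<Longrightarrow> b \<in> J \<Longrightarrow> 0 \<le> g a b"
  shows "(\<Sum>x\<in>same_class_pairs (multi_indices k R l).
      of_bool (fst (fst x) \<in> J \<and> snd (snd x) \<in> J) * g (fst (fst x)) (snd (snd x)))
    \<le> 4 ^ l * (\<Sum>a\<in>J. \<Sum>b\<in>J. g a b)"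
proof -
  let ?I = "multi_indices k R l"
  let ?W = "same_class_pairs ?I \<inter> {x. fst (fst x) \<in> J \<and> snd (snd x) \<in> J}"
  let ?ends = "\<lambda>x. (fst (fst x), snd (snd x))"
  have fin: "finite (same_class_pairs ?I)" "finite J"
    using finite_multi_indices[of k R l] assms(1) finite_subset
    unfolding same_class_pairs_def by (auto intro: finite_subset[of _ "(?I \<times> ?I) \<times> (?I \<times> ?I)"])
  have "(\<Sum>x\<in>same_class_pairs ?I. of_bool (fst (fst x) \<in> J \<and> snd (snd x) \<in> J)
      * g (fst (fst x)) (snd (snd x))) = (\<Sum>x\<in>?W. g (fst (fst x)) (snd (snd x)))"
    by (rule sum_of_bool_mult_eq[OF fin(1)])
  also have "\<dots> = (\<Sum>ab\<in>J \<times> J. \<Sum>x\<in>{x\<in>?W. ?ends x = ab}. g (fst (fst x)) (snd (snd x)))"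
    by (rule sum.group[symmetric]) (use fin in auto)
  also have "\<dots> = (\<Sum>ab\<in>J \<times> J. \<Sum>x\<in>{x\<in>?W. ?ends x = ab}. g (fst ab) (snd ab))"
    by (intro sum.cong refl) auto
  also have "\<dots> = (\<Sum>ab\<in>J \<times> J. card {x\<in>?W. ?ends x = ab} * g (fst ab) (snd ab))"
    by simp
  also have "\<dots> \<le> (\<Sum>ab\<in>J \<times> J. 4 ^ l * g (fst ab) (snd ab))"
  proof (intro sum_mono mult_right_mono)
    fix ab assume ab: "ab \<in> J \<times> J"
    have "card {x\<in>?W. ?ends x = ab}
        \<le> card {x \<in> same_class_pairs ?I. fst (fst x) = fst ab \<and> snd (snd x) = snd ab}"
      using fin by (intro card_mono) auto
    also have "\<dots> \<le> 4 ^ l" using ab assms(1) by (intro card_same_class_pairs_le) auto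
    finally show "real (card {x\<in>?W. ?ends x = ab}) \<le> 4 ^ l" by (simp flip: of_nat_le_iff)
    show "0 \<le> g (fst ab) (snd ab)" using ab assms(2) by auto
  qed
  also have "\<dots> = 4 ^ l * (\<Sum>a\<in>J. \<Sum>b\<in>J. g a b)"
    by (simp add: sum_distrib_left sum.cartesian_product split_def)
  finally show ?thesis .
qed

lemma xor_balanced_right_unique:
  "inj \<sigma> \<Longrightarrow> xor_balanced \<sigma> a b c d \<Longrightarrow> xor_balanced \<sigma> a b c d' \<Longrightarrow> d = d'"
  unfolding xor_balanced_def by (metis inj_eq xor_eq_0_iff xor.assoc)

lemma xor_balanced_same_left: "inj \<sigma> \<Longrightarrow> xor_balanced \<sigma> a a c d \<Longrightarrow> c = d"
  unfolding xor_balanced_def by (metis inj_eq xor_eq_0_iff xor_self_eq)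

text \<open>A partner \<open>v\<close> of \<open>u\<close> vanishes where \<open>u\<close> does, and on the at most \<open>2 l\<close> remaining coordinates
  its second entry is determined by its first; so \<open>v\<close> is determined by the first entries there.\<close>
lemma card_xor_partners_le:
  fixes t R l :: nat
  assumes "inj \<sigma>"
  defines "I \<equiv> multi_indices (2^t) R l"
  assumes "u \<in> cancel_common ` (I \<times> I)"
  shows "card {v \<in> cancel_common ` (I \<times> I). xor_compatible \<sigma> R u v} \<le> (2^t) ^ (2 * l)"
proof -
  obtain p where p: "p \<in> I \<times> I" and u: "u = cancel_common p" using assms(3) by auto
  define D where "D = {r. fst p r \<noteq> snd p r}"
  define V where "V = {v \<in> cancel_common ` (I \<times> I). xor_compatible \<sigma> R u v}"
  have D: "finite D" "card D \<le> 2 * l"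
    using p differ_multi_indices[of "fst p" "2^t" R l "snd p"] unfolding D_def I_def by auto
  have in_D: "r \<in> D \<longleftrightarrow> fst u r \<noteq> snd u r" for r
    unfolding D_def u cancel_common_def by auto
  have "inj_on (\<lambda>v. restrict (fst v) D) V"
  proof (rule inj_onI)
    fix v v' assume v: "v \<in> V" and v': "v' \<in> V" and eq: "restrict (fst v) D = restrict (fst v') D"
    obtain q q' where q: "q \<in> I \<times> I" "v = cancel_common q" and q': "q' \<in> I \<times> I" "v' = cancel_common q'"
      using v v' unfolding V_def by auto
    have "fst v r = fst v' r \<and> snd v r = snd v' r" for r
    proof (cases "r < R")
      case False
      then show ?thesis using q q' cancel_common_multi_indices(2)[of _ "2^t" R l r]
        unfolding I_def by auto
    next
      case True
      then have bal: "xor_balanced \<sigma> (fst u r) (snd u r) (fst v r) (snd v r)"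
          "xor_balanced \<sigma> (fst u r) (snd u r) (fst v' r) (snd v' r)"
        using v v' unfolding V_def xor_compatible_def by auto
      show ?thesis
      proof (cases "r \<in> D")
        case True
        then have "fst v r = fst v' r" using fun_cong[OF eq, of r] by simp
        then show ?thesis using xor_balanced_right_unique[OF assms(1)] bal by metis
      next
        case False
        then have "fst u r = snd u r" using in_D by simp
        then have "fst v r = snd v r" "fst v' r = snd v' r"
          using bal xor_balanced_same_left[OF assms(1)] by metis+
        then show ?thesis using q(2) q'(2) cancel_common_eq_imp_0 by metis
      qed
    qed
    then show "v = v'" by (simp add: prod_eq_iff fun_eq_iff)
  qed
  moreover have "(\<lambda>v. restrict (fst v) D) ` V \<subseteq> D \<rightarrow>\<^sub>E {0..<2^t}"
    using cancel_common_multi_indices(1)[of _ "2^t" R l] unfolding V_def I_def by fastforce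
  ultimately have "card V \<le> card (D \<rightarrow>\<^sub>E {0..<(2::nat)^t})"
    using D(1) by (metis card_image card_mono finite_PiE finite_atLeastLessThan)
  also have "\<dots> = (2^t) ^ card D" using D(1) by (simp add: card_PiE)
  also have "\<dots> \<le> (2^t) ^ (2 * l)" using D(2) by (intro power_increasing) auto
  finally show ?thesis unfolding V_def .
qed

section \<open>The invariance bound\<close>

lemma sum_diag_block_moment_le_squares:
  fixes k R l :: nat and L :: "(nat \<Rightarrow> nat) multiset \<Rightarrow> real"
  defines "I \<equiv> multi_indices k R l"
  assumes "pseudo_exp4 I L" "J \<subseteq> I"
    and "\<And>u p q. \<Phi> u \<Longrightarrow> p \<in> cancel_class I u \<Longrightarrow> q \<in> cancel_class I u \<Longrightarrow> fst p \<in> J \<and> snd q \<in> J"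
  shows "(\<Sum>u\<in>cancel_common ` (I \<times> I). of_bool (\<Phi> u) * block_moment L (cancel_class I u) (cancel_class I u))
    \<le> 4 ^ l * (\<Sum>a\<in>J. \<Sum>b\<in>J. L {#a, a, b, b#})"
proof -
  have fin: "finite I" unfolding I_def by (rule finite_multi_indices)
  have class_sub: "cancel_class I u \<subseteq> I \<times> I" for u unfolding cancel_class_def by auto
  have sq: "0 \<le> L {#a, a, b, b#}" if "a \<in> I" "b \<in> I" for a b
    by (rule pseudo_exp4_square_nonneg[OF fin assms(2) that])
  have "(\<Sum>u\<in>cancel_common ` (I \<times> I). of_bool (\<Phi> u) * block_moment L (cancel_class I u) (cancel_class I u))
      \<le> (\<Sum>u\<in>cancel_common ` (I \<times> I). of_bool (\<Phi> u)
          * (\<Sum>p\<in>cancel_class I u. \<Sum>q\<in>cancel_class I u. L {#fst p, fst p, snd q, snd q#}))"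
    by (intro sum_mono mult_left_mono block_moment_diag_le[OF fin assms(2) class_sub]) auto
  also have "\<dots> \<le> (\<Sum>u\<in>cancel_common ` (I \<times> I). \<Sum>p\<in>cancel_class I u. \<Sum>q\<in>cancel_class I u.
      of_bool (fst p \<in> J \<and> snd q \<in> J) * L {#fst p, fst p, snd q, snd q#})"
  proof (intro sum_mono)
    fix u
    show "of_bool (\<Phi> u) * (\<Sum>p\<in>cancel_class I u. \<Sum>q\<in>cancel_class I u. L {#fst p, fst p, snd q, snd q#})
      \<le> (\<Sum>p\<in>cancel_class I u. \<Sum>q\<in>cancel_class I u.
          of_bool (fst p \<in> J \<and> snd q \<in> J) * L {#fst p, fst p, snd q, snd q#})"
    proof (cases "\<Phi> u")
      case True
      then show ?thesis using assms(4) by (simp add: sum_mono)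
    next
      case False
      have "0 \<le> L {#fst p, fst p, snd q, snd q#}" if "p \<in> cancel_class I u" "q \<in> cancel_class I u" for p q
        using sq subsetD[OF class_sub that(1)] subsetD[OF class_sub that(2)] by (simp add: mem_Times_iff)
      then show ?thesis using False by (simp add: sum_nonneg)
    qed
  qed
  also have "\<dots> = (\<Sum>x\<in>same_class_pairs I.
      of_bool (fst (fst x) \<in> J \<and> snd (snd x) \<in> J) * L {#fst (fst x), fst (fst x), snd (snd x), snd (snd x)#})"
    by (rule sum_cancel_classes_eq[OF fin])
  also have "\<dots> \<le> 4 ^ l * (\<Sum>a\<in>J. \<Sum>b\<in>J. L {#a, a, b, b#})"
    using assms(3) sq unfolding I_def by (intro sum_same_class_pairs_le) auto
  finally show ?thesis .
qed

lemma sum_block_moment_diag_le: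
  fixes k R l :: nat and L :: "(nat \<Rightarrow> nat) multiset \<Rightarrow> real"
  defines "I \<equiv> multi_indices k R l"
  assumes "pseudo_exp4 I L" "pE_norm4 I L \<le> 1"
  shows "(\<Sum>u\<in>cancel_common ` (I \<times> I). block_moment L (cancel_class I u) (cancel_class I u)) \<le> 4 ^ l"
proof -
  have "(\<Sum>u\<in>cancel_common ` (I \<times> I). of_bool True * block_moment L (cancel_class I u) (cancel_class I u))
      \<le> 4 ^ l * (\<Sum>a\<in>I. \<Sum>b\<in>I. L {#a, a, b, b#})"
    unfolding I_def
    by (rule sum_diag_block_moment_le_squares) (use assms(2) in \<open>auto simp: I_def cancel_class_def\<close>)
  also have "\<dots> \<le> 4 ^ l" using assms(3) unfolding pE_norm4_def by simp
  finally show ?thesis by simp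
qed

lemma sum_heavy_block_moment_diag_le:
  fixes k R l :: nat and L :: "(nat \<Rightarrow> nat) multiset \<Rightarrow> real"
  defines "I \<equiv> multi_indices k R l"
  assumes pe: "pseudo_exp4 I L"
  shows "(\<Sum>u\<in>cancel_common ` (I \<times> I). of_bool (\<exists>r<R. heavy_at r u)
      * block_moment L (cancel_class I u) (cancel_class I u)) \<le> 4 ^ l * pE_tau R I L"
proof -
  let ?S = "cancel_common ` (I \<times> I)"
  let ?Q = "\<lambda>u. block_moment L (cancel_class I u) (cancel_class I u)"
  have "0 \<le> ?Q u" for u
    using pe finite_multi_indices unfolding I_def
    by (intro block_moment_diag_nonneg) (auto simp: cancel_class_def)
  moreover have "of_bool (\<exists>r<R. heavy_at r u) \<le> (\<Sum>r<R. of_bool (heavy_at r u) :: real)" for u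
    by (auto simp: Suc_le_eq card_gt_0_iff)
  ultimately have "(\<Sum>u\<in>?S. of_bool (\<exists>r<R. heavy_at r u) * ?Q u) \<le> (\<Sum>u\<in>?S. \<Sum>r<R. of_bool (heavy_at r u) * ?Q u)"
    by (intro sum_mono) (simp add: sum_distrib_right[symmetric] mult_right_mono)
  also have "\<dots> = (\<Sum>r<R. \<Sum>u\<in>?S. of_bool (heavy_at r u) * ?Q u)" by (rule sum.swap)
  also have "\<dots> \<le> (\<Sum>r<R. 4 ^ l * (\<Sum>a\<in>{a\<in>I. a r \<noteq> 0}. \<Sum>b\<in>{b\<in>I. b r \<noteq> 0}. L {#a, a, b, b#}))"
    unfolding I_def using pe heavy_at_cancel_class
    by (intro sum_mono sum_diag_block_moment_le_squares) (auto simp: I_def cancel_class_def)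
  also have "\<dots> = 4 ^ l * pE_tau R I L" unfolding pE_tau_def by (simp add: sum_distrib_left)
  finally show ?thesis .
qed

lemma pE_moment4_diff_le:
  fixes t R l :: nat and L :: "(nat \<Rightarrow> nat) multiset \<Rightarrow> real"
  assumes "\<sigma> permutes {0..<2^t}" "\<sigma> 0 = 0"
  defines "I \<equiv> multi_indices (2^t) R l"
  assumes pe: "pseudo_exp4 I L" and norm: "pE_norm4 I L \<le> 1" and "\<eta> > 0"
  shows "\<bar>pE_moment4 R I L (X_space t R) (X_val t \<sigma>) - pE_moment4 R I L (Y_space (2^t) R) Y_val\<bar>
    \<le> (2^t) ^ (2 * l) * (\<eta> * (4 ^ l * pE_tau R I L) + 4 ^ l / \<eta>)"
proof -
  let ?S = "cancel_common ` (I \<times> I)"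
  define Q where "Q u v = block_moment L (cancel_class I u) (cancel_class I v)" for u v
  have fin: "finite I" unfolding I_def by (rule finite_multi_indices)
  have class_sub: "cancel_class I u \<subseteq> I \<times> I" for u unfolding cancel_class_def by auto
  have inj: "inj \<sigma>" using assms(1) by (rule permutes_inj)
  have "pE_moment4 R I L (X_space t R) (X_val t \<sigma>) - pE_moment4 R I L (Y_space (2^t) R) Y_val
    = (\<Sum>u\<in>?S. \<Sum>v\<in>?S. (of_bool (xor_compatible \<sigma> R u v) - of_bool (even_compatible R u v)) * Q u v)"
    unfolding Q_def I_def by (rule pE_moment4_diff_eq[OF assms(1,2)])
  also have "\<bar>\<dots>\<bar>
    \<le> (2^t) ^ (2 * l) * (\<eta> * (\<Sum>u\<in>?S. of_bool (\<exists>r<R. heavy_at r u) * Q u u) + (\<Sum>u\<in>?S. Q u u) / \<eta>)"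
  proof (rule abs_sum_sparse_form_le[where adj = "xor_compatible \<sigma> R"])
    show "finite ?S" using fin by simp
    show "0 \<le> Q u u" for u unfolding Q_def by (rule block_moment_diag_nonneg[OF fin pe class_sub])
    show "2 * \<bar>Q u v\<bar> \<le> \<eta> * Q u u + Q v v / \<eta>" for u v
      unfolding Q_def by (rule block_moment_abs_le[OF fin pe class_sub class_sub \<open>\<eta> > 0\<close>])
    show "xor_compatible \<sigma> R u v \<and> ((\<exists>r<R. heavy_at r u) \<or> (\<exists>r<R. heavy_at r v))"
      if "of_bool (xor_compatible \<sigma> R u v) - of_bool (even_compatible R u v) \<noteq> (0::real)" for u v
      using that xor_not_even_imp_heavy[OF inj assms(2), of R u v]
        even_compatible_imp_xor_compatible[of R u v \<sigma>]
      by (cases "xor_compatible \<sigma> R u v"; cases "even_compatible R u v") auto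
    show "real (card {v \<in> ?S. xor_compatible \<sigma> R u v}) \<le> (2^t) ^ (2 * l)" if "u \<in> ?S" for u
    proof -
      have "card {v \<in> ?S. xor_compatible \<sigma> R u v} \<le> (2^t) ^ (2 * l)"
        using card_xor_partners_le[OF inj that[unfolded I_def]] unfolding I_def .
      then have "real (card {v \<in> ?S. xor_compatible \<sigma> R u v}) \<le> real ((2^t) ^ (2 * l))"
        by (simp only: of_nat_le_iff)
      then show ?thesis by simp
    qed
  qed (use \<open>\<eta> > 0\<close> in \<open>simp_all add: Q_def block_moment_commute xor_compatible_commute\<close>)
  also have "\<dots> \<le> (2^t) ^ (2 * l) * (\<eta> * (4 ^ l * pE_tau R I L) + 4 ^ l / \<eta>)"
    using sum_block_moment_diag_le[OF pe[unfolded I_def] norm[unfolded I_def]]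
      sum_heavy_block_moment_diag_le[OF pe[unfolded I_def]] \<open>\<eta> > 0\<close>
    unfolding Q_def I_def by (intro mult_left_mono add_mono divide_right_mono) auto
  finally show ?thesis .
qed

lemma pE_moment4_diff_le_sqrt:
  fixes t R l :: nat and L :: "(nat \<Rightarrow> nat) multiset \<Rightarrow> real"
  assumes "\<sigma> permutes {0..<2^t}" "\<sigma> 0 = 0"
  defines "I \<equiv> multi_indices (2^t) R l"
  assumes pe: "pseudo_exp4 I L" and norm: "pE_norm4 I L \<le> 1"
  shows "\<bar>pE_moment4 R I L (X_space t R) (X_val t \<sigma>) - pE_moment4 R I L (Y_space (2^t) R) Y_val\<bar>
    \<le> 2 * (4 ^ l * (2^t) ^ (2 * l)) * sqrt (pE_tau R I L)"
proof -
  define M :: real where "M = 4 ^ l * (2^t) ^ (2 * l)"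
  have "M \<ge> 0" "pE_tau R I L \<ge> 0"
    unfolding M_def I_def using pE_tau_nonneg[OF finite_multi_indices pe[unfolded I_def]] by auto
  have "\<bar>pE_moment4 R I L (X_space t R) (X_val t \<sigma>) - pE_moment4 R I L (Y_space (2^t) R) Y_val\<bar>
      \<le> 2 * sqrt ((M * pE_tau R I L) * M)"
  proof (rule le_two_sqrt_mult_of_forall_pos)
    fix \<eta> :: real assume "\<eta> > 0"
    have "(2^t) ^ (2 * l) * (\<eta> * (4 ^ l * pE_tau R I L) + 4 ^ l / \<eta>) = \<eta> * (M * pE_tau R I L) + M / \<eta>"
      unfolding M_def by (simp only: distrib_left) (simp add: mult_ac)
    then show "\<bar>pE_moment4 R I L (X_space t R) (X_val t \<sigma>) - pE_moment4 R I L (Y_space (2^t) R) Y_val\<bar>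
        \<le> \<eta> * (M * pE_tau R I L) + M / \<eta>"
      using pE_moment4_diff_le[OF assms(1,2) pe[unfolded I_def] norm[unfolded I_def] \<open>\<eta> > 0\<close>]
      unfolding I_def by simp
  qed (use \<open>M \<ge> 0\<close> \<open>pE_tau R I L \<ge> 0\<close> in simp_all)
  also have "(M * pE_tau R I L) * M = (M * M) * pE_tau R I L" by (simp add: algebra_simps)
  finally show ?thesis using \<open>M \<ge> 0\<close> by (simp add: real_sqrt_mult M_def)
qed

lemma two_mult_four_power_le_powr:
  fixes k l :: nat
  assumes "2 \<le> k" "0 < l"
  shows "2 * (4 ^ l * real k ^ (2 * l)) \<le> real k powr (5 * real l)"
proof -
  have "(4::nat) ^ l = 2 ^ (2 * l)" by (simp add: power_mult)
  also have "\<dots> \<le> k ^ (2 * l)" using assms(1) by (intro power_mono) auto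
  finally have "4 ^ l \<le> k ^ (2 * l)" .
  moreover have "2 \<le> k ^ l" using assms by (metis le_trans self_le_power one_le_numeral)
  ultimately have "2 * (4 ^ l * k ^ (2 * l)) \<le> k ^ l * (k ^ (2 * l) * k ^ (2 * l))"
    by (intro mult_mono) auto
  also have "\<dots> = k ^ (5 * l)" by (simp flip: power_add)
  finally have "real (2 * (4 ^ l * k ^ (2 * l))) \<le> real (k ^ (5 * l))"
    by (simp only: of_nat_le_iff)
  moreover have "real k powr (5 * real l) = real k ^ (5 * l)"
    using assms(1) by (simp add: powr_realpow[symmetric])
  ultimately show ?thesis by simp
qed

theorem theorem6p2:
  "\<exists>C0::real. \<forall>(t::nat) (R::nat) (l::nat) (\<sigma>::nat \<Rightarrow> nat)
      (L :: (nat \<Rightarrow> nat) multiset \<Rightarrow> real).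
     t > 0 \<longrightarrow> R > 0 \<longrightarrow> l > 0 \<longrightarrow>
     \<sigma> permutes {0..<2^t} \<longrightarrow> \<sigma> 0 = 0 \<longrightarrow>
     pseudo_exp4 (multi_indices (2^t) R l) L \<longrightarrow>
     pE_norm4 (multi_indices (2^t) R l) L \<le> 1 \<longrightarrow>
     \<bar>pE_moment4 R (multi_indices (2^t) R l) L (X_space t R) (X_val t \<sigma>)
      - pE_moment4 R (multi_indices (2^t) R l) L (Y_space (2^t) R) Y_val\<bar>
     \<le> real (2^t) powr (C0 * real l) * sqrt (pE_tau R (multi_indices (2^t) R l) L)"
proof (intro exI[of _ 5] allI impI)
  fix t R l :: nat and \<sigma> :: "nat \<Rightarrow> nat" and L :: "(nat \<Rightarrow> nat) multiset \<Rightarrow> real"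
  assume "t > 0" "R > 0" "l > 0" "\<sigma> permutes {0..<2^t}" "\<sigma> 0 = 0"
    and pe: "pseudo_exp4 (multi_indices (2^t) R l) L" and norm: "pE_norm4 (multi_indices (2^t) R l) L \<le> 1"
  have "2 \<le> (2::nat) ^ t" using \<open>t > 0\<close> by (simp add: self_le_power)
  have "\<bar>pE_moment4 R (multi_indices (2^t) R l) L (X_space t R) (X_val t \<sigma>)
      - pE_moment4 R (multi_indices (2^t) R l) L (Y_space (2^t) R) Y_val\<bar>
    \<le> 2 * (4 ^ l * (2^t) ^ (2 * l)) * sqrt (pE_tau R (multi_indices (2^t) R l) L)"
    by (rule pE_moment4_diff_le_sqrt[OF \<open>\<sigma> permutes _\<close> \<open>\<sigma> 0 = 0\<close> pe norm])
  also have "\<dots> \<le> real (2^t) powr (5 * real l) * sqrt (pE_tau R (multi_indices (2^t) R l) L)"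
    using two_mult_four_power_le_powr[OF \<open>2 \<le> 2^t\<close> \<open>l > 0\<close>]
      pE_tau_nonneg[OF finite_multi_indices pe] by (intro mult_right_mono) auto
  finally show "\<bar>pE_moment4 R (multi_indices (2^t) R l) L (X_space t R) (X_val t \<sigma>)
      - pE_moment4 R (multi_indices (2^t) R l) L (Y_space (2^t) R) Y_val\<bar>
    \<le> real (2^t) powr (5 * real l) * sqrt (pE_tau R (multi_indices (2^t) R l) L)" .
qed

end
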